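(* With $\Phi^{\cdot}:\mathcal{B}^{\cdot}\to K^{\cdot}$ as below, let $\tilde\Phi^{\cdot}$ be the composite of $\Phi^{\cdot}$ with restriction to the diagonal, $K^{-q}|_\Delta\cong\Omega^q_U$ (identifying $e^i|_\Delta$ with $dz^i$). Then for every $q\ge1$ and $f_0,\dots,f_{q+1}\in A$, $$\tilde\Phi^{-q}(f_0\otimes\cdots\otimes f_{q+1})=\frac{1}{q!}\,f_0(z)f_{q+1}(z)\,df_1\wedge\cdots\wedge df_q .$$
   Context: $U$ is a Stein open set with global holomorphic coordinates $z^1,\dots,z^n$, $A=\Gamma(U,\mathcal{O})$. On $U\times U$ use coordinates $(z,\zeta)$, $z=p_1^*z$, $\zeta=p_2^*z$. Bar complex: $\mathcal{B}^{-q}(A)=A^{\otimes(q+2)}$ over $\mathbb{C}$, with $\partial(f_0\otimes\cdots\otimes f_{q+1})=\sum_{i=0}^{q}(-1)^i f_0\otimes\cdots\otimes f_if_{i+1}\otimes\cdots\otimes f_{q+1}$. Koszul complex: $K^{-q}=\Lambda^q(\bigoplus_{i=1}^n\mathcal{O}_{U\times U}e^i)$, $d_K$ = contraction with $\sum_i(z^i-\zeta^i)\check e^i$. Homotopy $P(fe^I)=\sum_{j}\Big(\int_0^1t^{|I|}\frac{\partial f}{\partial z^j}(\zeta+t(z-\zeta),\zeta)dt\Big)e^j\wedge e^I$. $\Phi^{\cdot}$ is the $A^e$-linear map with $\Phi^0(f_0\otimes f_1)=f_0(z)f_1(\zeta)$ and $\Phi^{-q}(f_0\otimes\cdots\otimes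 f_{q+1})=f_0(z)\{P\Phi^{-(q-1)}(\partial(1\otimes f_1\otimes\cdots\otimes f_q\otimes 1))\}f_{q+1}(\zeta)$ for $1\le q\le n$, $\Phi^{-q}=0$ for $q>n$. *)

theory Defs
  imports "HOL-Analysis.Analysis"
begin

text \<open>Points of C^n are vectors complex^'n; the index type 'n carries a linear order,
 which plays the role of the ordering 1 < ... < n of the coordinates z^1,...,z^n.
 A (mixed-degree) element of the Koszul complex on U x U is given by its coefficients
 on the basis e^I = e^{i_1} wedge ... wedge e^{i_k} (i_1 < ... < i_k), I a set of indices;
 a differential form on U likewise by its coefficients on dz^I.\<close>

type_synonym 'n kform = "'n set \<Rightarrow> complex^'n \<Rightarrow> complex^'n \<Rightarrow> complex"
type_synonym 'n dform = "'n set \<Rightarrow> complex^'n \<Rightarrow> complex"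

definition holo_on :: "(complex^'n) set \<Rightarrow> (complex^'n \<Rightarrow> complex) \<Rightarrow> bool" where
  "holo_on U f \<longleftrightarrow> (\<forall>z\<in>U. \<exists>L. (f has_derivative L) (at z) \<and>
                        (\<forall>(c::complex) v. L (c *s v) = c * L v))"

definition holo_hull :: "(complex^'n) set \<Rightarrow> (complex^'n) set \<Rightarrow> (complex^'n) set" where
  "holo_hull U K = {x\<in>U. \<forall>f. holo_on U f \<longrightarrow> (\<exists>y\<in>K. norm (f x) \<le> norm (f y))}"

definition stein :: "(complex^'n) set \<Rightarrow> bool" where
  "stein U \<longleftrightarrow> open U \<and> (\<forall>K. compact K \<and> K \<subseteq> U \<longrightarrow> compact (holo_hull U K))"

definition pz :: "'n \<Rightarrow> (complex^'n \<Rightarrow> complex^'n \<Rightarrow> complex) \<Rightarrow> complex^'n \<Rightarrow> complex^'n \<Rightarrow> complex" where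
  "pz j F z w = deriv (\<lambda>c. F (\<chi> k. if k = j then c else z$k) w) (z$j)"

definition pd :: "'n \<Rightarrow> (complex^'n \<Rightarrow> complex) \<Rightarrow> complex^'n \<Rightarrow> complex" where
  "pd i f z = deriv (\<lambda>c. f (\<chi> k. if k = i then c else z$k)) (z$i)"

text \<open>Sign: e^j wedge e^I = wsign j I * e^(insert j I) for j not in I.\<close>
definition wsign :: "'n::linorder \<Rightarrow> 'n set \<Rightarrow> complex" where
  "wsign j I = (-1) ^ card {i\<in>I. i < j}"

definition KP :: "('n::{finite,linorder}) kform \<Rightarrow> 'n kform" where
  "KP \<omega> J z w = (\<Sum>j\<in>J. wsign j (J - {j}) *
      integral {0..1::real} (\<lambda>t. complex_of_real (t ^ card (J - {j})) *
          pz j (\<omega> (J - {j})) (w + t *\<^sub>R (z - w)) w))"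

text \<open>Bar differential on a pure tensor f_0 x ... x f_{q+1} (list of length q+2):
  list of (sign, pure tensor) summands.\<close>
definition bar_d :: "('a \<Rightarrow> complex) list \<Rightarrow> (complex \<times> ('a \<Rightarrow> complex) list) list" where
  "bar_d fs = map (\<lambda>i. ((-1) ^ i,
       take i fs @ [(\<lambda>x. (fs!i) x * (fs!(i+1)) x)] @ drop (i+2) fs)) [0..<length fs - 1]"

text \<open>Phi q fs = Phi^{-q}(f_0 x ... x f_{q+1}), fs = [f_0,...,f_{q+1}].\<close>
primrec Phi :: "nat \<Rightarrow> (complex^('n::{finite,linorder}) \<Rightarrow> complex) list \<Rightarrow> 'n kform" where
  "Phi 0 fs = (\<lambda>J z w. if J = {} then (fs!0) z * (fs!1) w else 0)"
| "Phi (Suc q) fs =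
     (if CARD('n) < Suc q then (\<lambda>J z w. 0)
      else (\<lambda>J z w. (fs!0) z *
              KP (\<lambda>I x y. sum_list (map (\<lambda>(s, gs). s * Phi q gs I x y)
                      (bar_d ([\<lambda>_. 1] @ take (Suc q) (drop 1 fs) @ [\<lambda>_. 1])))) J z w
              * (fs!(Suc q + 1)) w))"

definition Phi_tilde :: "nat \<Rightarrow> (complex^('n::{finite,linorder}) \<Rightarrow> complex) list \<Rightarrow> 'n dform" where
  "Phi_tilde q fs J z = Phi q fs J z z"

definition dfun :: "(complex^'n \<Rightarrow> complex) \<Rightarrow> 'n dform" where
  "dfun f J z = (if card J = 1 then pd (the_elem J) f z else 0)"

definition shuffle_sign :: "'n::linorder set \<Rightarrow> 'n set \<Rightarrow> complex" where
  "shuffle_sign I J = (-1) ^ card {(i, j). i \<in> I \<and> j \<in> J \<and> j < i}"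

definition wedge :: "('n::{finite,linorder}) dform \<Rightarrow> 'n dform \<Rightarrow> 'n dform" where
  "wedge \<alpha> \<beta> K z = (\<Sum>I\<in>Pow K. shuffle_sign I (K - I) * \<alpha> I z * \<beta> (K - I) z)"

definition form_one :: "'n dform" where
  "form_one J z = (if J = {} then 1 else 0)"

definition dwedge :: "(complex^('n::{finite,linorder}) \<Rightarrow> complex) list \<Rightarrow> 'n dform" where
  "dwedge fs = foldr wedge (map dfun fs) form_one"

end

theory Submission
  imports Defs "HOL-Complex_Analysis.Cauchy_Integral_Formula"
begin

(* On the diagonal the homotopy P divides by the degree: since the integral of t^|I| over
   [0,1] is 1/(|I|+1), the e^J-coefficient of P w at (z,z) is that of d_x w divided by |J|,
   where d_x is the exterior derivative in the first variable. Moreover d_x (P w) vanishes on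
   the diagonal: its coefficients are sums of mixed partials d_j d_l weighted by signs that are
   antisymmetric in (j,l). In the bar differential of 1 (x) f_1 (x) ... (x) f_q (x) 1 only the
   first summand has a non-constant first factor, so by the Leibniz rule and induction on q,
   d_x Phi^(-(q-1)) of it is df_1 ^ ... ^ df_q / (q-1)! on the diagonal; dividing by |J| = q
   gives 1/q!. The analytic input is that all coefficients stay continuous and separately
   holomorphic, a class closed under partial derivatives (Cauchy's formula on a circle,
   differentiated under the integral sign) in which mixed partials commute. *)

section \<open>Coordinate updates and separately holomorphic functions\<close>

definition coord_upd :: "complex^'n \<Rightarrow> 'n \<Rightarrow> complex \<Rightarrow> complex^'n" where
  "coord_upd y k c = (\<chi> i. if i = k then c else y$i)"

lemma coord_upd_nth [simp]: "coord_upd y k c $ i = (if i = k then c else y$i)"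
  by (simp add: coord_upd_def)

lemma coord_upd_self [simp]: "coord_upd y k (y$k) = y"
  by (simp add: vec_eq_iff)

lemma coord_upd_upd [simp]: "coord_upd (coord_upd y k c) k d = coord_upd y k d"
  by (simp add: vec_eq_iff)

lemma coord_upd_commute: "j \<noteq> k \<Longrightarrow> coord_upd (coord_upd y j c) k d = coord_upd (coord_upd y k d) j c"
  by (simp add: vec_eq_iff)

lemma coord_upd_eq_add_axis: "coord_upd y k c = y + axis k (c - y$k)"
  by (simp add: vec_eq_iff axis_def)

lemma norm_axis_complex: "norm (axis k (c::complex)) = norm c"
  by (simp add: norm_vec_def axis_def L2_set_def sum.delta' if_distrib[of "\<lambda>x. (norm x)^2"] cong: if_cong)

lemma dist_coord_upd_self: "dist (coord_upd y k c) y = cmod (c - y$k)"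
  by (simp add: coord_upd_eq_add_axis dist_norm norm_axis_complex)

lemma continuous_on_coord_upd [continuous_intros]:
  assumes "continuous_on S f" "continuous_on S g"
  shows "continuous_on S (\<lambda>x. coord_upd (f x) k (g x))"
  unfolding coord_upd_def
proof (rule continuous_on_vec_lambda)
  show "continuous_on S (\<lambda>x. if i = k then g x else f x $ i)" for i
    using assms by (cases "i = k") (auto intro: continuous_intros)
qed

lemma open_coord_upd_preimage: "open B \<Longrightarrow> open {c. coord_upd y k c \<in> B}"
  using continuous_on_coord_upd[OF continuous_on_const continuous_on_id, of UNIV y k]
  by (simp add: continuous_on_open_vimage vimage_def)

lemma pd_eq_deriv_coord_upd: "pd k h y = deriv (\<lambda>c. h (coord_upd y k c)) (y$k)"
  by (simp add: pd_def coord_upd_def)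

lemma pd_eqI: "((\<lambda>c. f (coord_upd y j c)) has_field_derivative D) (at (y$j)) \<Longrightarrow> pd j f y = D"
  by (simp add: pd_eq_deriv_coord_upd DERIV_imp_deriv)

text \<open>Continuity together with holomorphy in each coordinate separately (by Osgood's lemma,
  just holomorphy) is the form of regularity that the Cauchy-formula arguments below propagate.\<close>

definition sep_holomorphic_on :: "(complex^'n) set \<Rightarrow> (complex^'n \<Rightarrow> complex) \<Rightarrow> bool" where
  "sep_holomorphic_on B h \<longleftrightarrow> continuous_on B h \<and>
     (\<forall>y\<in>B. \<forall>k. (\<lambda>c. h (coord_upd y k c)) holomorphic_on {c. coord_upd y k c \<in> B})"

lemma sep_holomorphic_on_imp_continuous_on: "sep_holomorphic_on B h \<Longrightarrow> continuous_on B h"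
  by (simp add: sep_holomorphic_on_def)

lemma sep_holomorphic_onD:
  "sep_holomorphic_on B h \<Longrightarrow> y \<in> B \<Longrightarrow> (\<lambda>c. h (coord_upd y k c)) holomorphic_on {c. coord_upd y k c \<in> B}"
  by (simp add: sep_holomorphic_on_def)

lemma sep_holomorphic_on_has_pd:
  assumes "open B" "sep_holomorphic_on B h" "y \<in> B"
  shows "((\<lambda>c. h (coord_upd y k c)) has_field_derivative pd k h y) (at (y$k))"
proof -
  have "(\<lambda>c. h (coord_upd y k c)) field_differentiable at (y$k)"
    using sep_holomorphic_onD[OF assms(2,3), of k] open_coord_upd_preimage[OF assms(1), of y k] assms(3)
    by (intro holomorphic_on_imp_differentiable_at) auto
  then show ?thesis by (simp add: pd_eq_deriv_coord_upd DERIV_deriv_iff_field_differentiable)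
qed

lemma sep_holomorphic_on_has_pd_at:
  assumes "open B" "sep_holomorphic_on B h" "coord_upd y k c \<in> B"
  shows "((\<lambda>c. h (coord_upd y k c)) has_field_derivative pd k h (coord_upd y k c)) (at c)"
  using sep_holomorphic_on_has_pd[OF assms, of k] by simp

lemma sep_holomorphic_on_const: "sep_holomorphic_on B (\<lambda>x. c)"
  unfolding sep_holomorphic_on_def by (auto intro: continuous_intros holomorphic_intros)

lemma sep_holomorphic_on_add:
  "sep_holomorphic_on B f \<Longrightarrow> sep_holomorphic_on B g \<Longrightarrow> sep_holomorphic_on B (\<lambda>x. f x + g x)"
  unfolding sep_holomorphic_on_def by (auto intro: continuous_intros holomorphic_intros)

lemma sep_holomorphic_on_mult:
  "sep_holomorphic_on B f \<Longrightarrow> sep_holomorphic_on B g \<Longrightarrow> sep_holomorphic_on B (\<lambda>x. f x * g x)"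
  unfolding sep_holomorphic_on_def by (auto intro: continuous_intros holomorphic_intros)

lemma sep_holomorphic_on_cmult: "sep_holomorphic_on B f \<Longrightarrow> sep_holomorphic_on B (\<lambda>x. c * f x)"
  using sep_holomorphic_on_mult[OF sep_holomorphic_on_const] by blast

lemma sep_holomorphic_on_sum:
  "(\<And>i. i \<in> I \<Longrightarrow> sep_holomorphic_on B (f i)) \<Longrightarrow> sep_holomorphic_on B (\<lambda>x. \<Sum>i\<in>I. f i x)"
  by (induction I rule: infinite_finite_induct)
     (auto intro: sep_holomorphic_on_add sep_holomorphic_on_const)

lemma pd_const: "pd j (\<lambda>x. c) y = 0"
  by (rule pd_eqI) simp

lemma pd_mult:
  assumes "open B" "sep_holomorphic_on B f" "sep_holomorphic_on B g" "y \<in> B"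
  shows "pd j (\<lambda>x. f x * g x) y = pd j f y * g y + f y * pd j g y"
proof (rule pd_eqI)
  show "((\<lambda>c. f (coord_upd y j c) * g (coord_upd y j c)) has_field_derivative
         pd j f y * g y + f y * pd j g y) (at (y$j))"
    using DERIV_mult[OF sep_holomorphic_on_has_pd[OF assms(1,2,4)] sep_holomorphic_on_has_pd[OF assms(1,3,4)]]
    by (simp add: ac_simps)
qed

lemma pd_cmult:
  assumes "open B" "sep_holomorphic_on B f" "y \<in> B"
  shows "pd j (\<lambda>x. c * f x) y = c * pd j f y"
  by (rule pd_eqI, rule DERIV_cmult[OF sep_holomorphic_on_has_pd[OF assms]])

lemma pd_sum:
  assumes "open B" "\<And>i. i \<in> I \<Longrightarrow> sep_holomorphic_on B (f i)" "y \<in> B"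
  shows "pd j (\<lambda>x. \<Sum>i\<in>I. f i x) y = (\<Sum>i\<in>I. pd j (f i) y)"
proof (cases "finite I")
  case True
  show ?thesis
    by (rule pd_eqI, rule DERIV_sum) (rule sep_holomorphic_on_has_pd[OF assms(1) assms(2) assms(3)])
qed (simp add: pd_const)

lemma pd_mult_right:
  assumes "open B" "sep_holomorphic_on B f" "y \<in> B"
  shows "pd j (\<lambda>x. f x * c) y = pd j f y * c"
  by (rule pd_eqI, rule DERIV_cmult_right[OF sep_holomorphic_on_has_pd[OF assms]])

lemma has_derivative_coord_upd:
  fixes y :: "complex^'n"
  shows "((\<lambda>c. coord_upd y k c) has_derivative (\<lambda>d. axis k d)) (at c)"
proof -
  have "bounded_linear (\<lambda>d::complex. axis k d :: complex^'n)"
    by (rule bounded_linear_intro[where K=1]) (auto simp: axis_def vec_eq_iff norm_axis_complex[unfolded axis_def])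
  then have "((\<lambda>c. axis k (c - y$k) :: complex^'n) has_derivative (\<lambda>d. axis k (d - 0))) (at c)"
    by (rule bounded_linear.has_derivative[OF _ has_derivative_diff[OF has_derivative_ident has_derivative_const]])
  then have "((\<lambda>c. y + axis k (c - y$k)) has_derivative (\<lambda>d. 0 + axis k (d - 0))) (at c)"
    by (rule has_derivative_add[OF has_derivative_const])
  then show ?thesis
    by (simp add: coord_upd_eq_add_axis)
qed

lemma holo_on_imp_sep_holomorphic_on:
  fixes f :: "complex^'n \<Rightarrow> complex"
  assumes "holo_on U f" "B \<subseteq> U" "open B"
  shows "sep_holomorphic_on B f"
proof -
  have deriv_f: "\<exists>L. (f has_derivative L) (at z) \<and> (\<forall>(c::complex) v. L (c *s v) = c * L v)"
    if "z \<in> B" for z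
    using assms that unfolding holo_on_def by blast
  have "continuous_on B f"
    using deriv_f has_derivative_continuous by (metis continuous_at_imp_continuous_on)
  moreover have "(\<lambda>c. f (coord_upd y k c)) field_differentiable at c"
    if yB: "coord_upd y k c \<in> B" for y k c
  proof -
    obtain L where L: "(f has_derivative L) (at (coord_upd y k c))" "\<forall>(c::complex) v. L (c *s v) = c * L v"
      using deriv_f[OF yB] by blast
    have "(\<lambda>d. L (axis k d)) = (\<lambda>d. L (axis k 1) * d)"
    proof
      fix d :: complex
      have "axis k d = d *s axis k (1::complex)"
        by (simp add: vec_eq_iff axis_def)
      then show "L (axis k d) = L (axis k 1) * d"
        using L(2) by (simp add: mult.commute)
    qed
    then have "((\<lambda>c. f (coord_upd y k c)) has_derivative (\<lambda>d. L (axis k 1) * d)) (at c)"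
      using has_derivative_compose[OF has_derivative_coord_upd L(1)] by simp
    then show ?thesis
      unfolding field_differentiable_def has_field_derivative_def by blast
  qed
  then have "(\<lambda>c. f (coord_upd y k c)) holomorphic_on {c. coord_upd y k c \<in> B}" for y k
    by (simp add: holomorphic_on_open[OF open_coord_upd_preimage[OF assms(3)]] field_differentiable_def)
  ultimately show ?thesis
    by (simp add: sep_holomorphic_on_def)
qed

section \<open>Partial derivatives via Cauchy's formula\<close>

definition circ :: "real \<Rightarrow> real \<Rightarrow> complex" where
  "circ \<rho> s = of_real \<rho> * exp (2 * of_real pi * \<i> * of_real s)"

lemma circ_nonzero: "\<rho> > 0 \<Longrightarrow> circ \<rho> s \<noteq> 0"
  by (simp add: circ_def)

lemma norm_circ: "\<rho> > 0 \<Longrightarrow> cmod (circ \<rho> s) = \<rho>"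
  by (simp add: circ_def norm_mult)

lemma continuous_on_circ [continuous_intros]: "continuous_on S f \<Longrightarrow> continuous_on S (\<lambda>x. circ \<rho> (f x))"
  unfolding circ_def by (intro continuous_intros)

lemma Cauchy_derivative_circle_integral:
  fixes \<phi> :: "complex \<Rightarrow> complex"
  assumes "\<rho> > 0" "continuous_on (cball c \<rho>) \<phi>" "\<phi> holomorphic_on ball c \<rho>"
  shows "(\<phi> has_field_derivative integral {0..1} (\<lambda>s. \<phi> (c + circ \<rho> s) / circ \<rho> s)) (at c)"
proof -
  have "(\<phi> has_field_derivative
          1 / (2 * of_real pi * \<i>) * contour_integral (circlepath c \<rho>) (\<lambda>u. \<phi> u / (u - c)^2)) (at c)"
    by (rule Cauchy_derivative_integral_circlepath(2)[OF assms(2,3)]) (simp add: assms(1))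
  moreover have "contour_integral (circlepath c \<rho>) (\<lambda>u. \<phi> u / (u - c)^2)
      = integral {0..1} (\<lambda>s. (2 * of_real pi * \<i>) * (\<phi> (c + circ \<rho> s) / circ \<rho> s))"
    unfolding contour_integral_integral vector_derivative_circlepath
    using circ_nonzero[OF assms(1)]
    by (intro integral_cong)
       (simp add: circlepath circ_def[symmetric] power2_eq_square field_simps, simp add: circ_def mult_ac)
  also have "\<dots> = (2 * of_real pi * \<i>) * integral {0..1} (\<lambda>s. \<phi> (c + circ \<rho> s) / circ \<rho> s)"
    by (rule integral_mult_right)
  ultimately show ?thesis
    by simp
qed

lemma continuous_on_slice:
  assumes "continuous_on (S \<times> T) (\<lambda>(x, t). F x t)" "x \<in> S"
  shows "continuous_on T (F x)"
proof -
  have "continuous_on T ((\<lambda>(x, t). F x t) \<circ> Pair x)"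
    by (rule continuous_on_compose[OF continuous_on_Pair[OF continuous_on_const continuous_on_id]
          continuous_on_subset[OF assms(1)]])
       (use assms(2) in auto)
  then show ?thesis
    by (simp add: o_def)
qed

lemma has_field_derivative_integral_param:
  fixes f f' :: "complex \<Rightarrow> real \<Rightarrow> complex"
  assumes S: "open S" "convex S" "x \<in> S"
    and f': "\<And>x t. x \<in> S \<Longrightarrow> t \<in> {0..1} \<Longrightarrow> ((\<lambda>x. f x t) has_field_derivative f' x t) (at x)"
    and cont_f: "continuous_on (S \<times> {0..1}) (\<lambda>(x, t). f x t)"
    and cont_f': "continuous_on (S \<times> {0..1}) (\<lambda>(x, t). f' x t)"
  shows "((\<lambda>x. integral {0..1} (f x)) has_field_derivative integral {0..1} (f' x)) (at x)"
proof -
  have "((\<lambda>x. integral (cbox 0 1) (f x)) has_field_derivative integral (cbox 0 1) (f' x)) (at x within S)"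
    using f' continuous_on_slice[OF cont_f] cont_f' S
    by (intro leibniz_rule_field_derivative) (auto intro: has_field_derivative_at_within integrable_continuous_real)
  then show ?thesis
    using at_within_open[OF S(3,1)] by simp
qed

lemma coord_upd_mem:
  assumes "x \<in> ball y \<rho>" "cmod (u - x$k) \<le> \<rho>" "cball y (2*\<rho>) \<subseteq> B"
  shows "coord_upd x k u \<in> B"
proof -
  have "dist y (coord_upd x k u) \<le> dist y x + dist x (coord_upd x k u)"
    by (rule dist_triangle)
  also have "dist x (coord_upd x k u) = cmod (u - x$k)"
    using dist_coord_upd_self[of x k u] by (simp add: dist_commute)
  finally show ?thesis
    using assms by auto
qed

lemma open_obtain_double_cball:
  assumes "open B" "y \<in> B"
  obtains \<rho> where "\<rho> > 0" "cball y (2*\<rho>) \<subseteq> B"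
proof -
  obtain e where e: "e > 0" "ball y e \<subseteq> B"
    using assms open_contains_ball by blast
  have "cball y (2*(e/3)) \<subseteq> ball y e"
    using e(1) by (auto simp: subset_iff)
  then show ?thesis
    using that[of "e/3"] e by auto
qed

lemma continuous_on_circle_integrand:
  assumes h: "continuous_on B h" and g: "continuous_on S g" and a: "continuous_on S a" and "\<rho> > 0"
    and "\<And>x s. x \<in> S \<Longrightarrow> s \<in> {0..1} \<Longrightarrow> coord_upd (g x) k (a x + circ \<rho> s) \<in> B"
  shows "continuous_on (S \<times> {0..1}) (\<lambda>(x, s). h (coord_upd (g x) k (a x + circ \<rho> s)) / circ \<rho> s)"
proof -
  have "continuous_on (S \<times> {0..1}) (\<lambda>p. g (fst p))" "continuous_on (S \<times> {0..1}) (\<lambda>p. a (fst p))"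
    by (auto intro: continuous_on_compose2[OF g continuous_on_fst] continuous_on_compose2[OF a continuous_on_fst])
  then have "continuous_on (S \<times> {0..1}) (\<lambda>p. h (coord_upd (g (fst p)) k (a (fst p) + circ \<rho> (snd p))) / circ \<rho> (snd p))"
    using assms circ_nonzero[OF assms(4)]
    by (intro continuous_intros continuous_on_compose2[OF h]) auto
  then show ?thesis
    by (simp add: split_beta)
qed

lemma pd_circle_integral:
  assumes B: "open B" "sep_holomorphic_on B h" and \<rho>: "\<rho> > 0" "cball y (2*\<rho>) \<subseteq> B"
    and x: "x \<in> ball y \<rho>"
  shows "pd k h x = integral {0..1} (\<lambda>s. h (coord_upd x k (x$k + circ \<rho> s)) / circ \<rho> s)"
proof -
  have sub: "coord_upd x k u \<in> B" if "u \<in> cball (x$k) \<rho>" for u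
    using coord_upd_mem[OF x _ \<rho>(2), of u k] that by (simp add: dist_norm norm_minus_commute)
  have "continuous_on (cball (x$k) \<rho>) (\<lambda>c. h (coord_upd x k c))"
    by (rule continuous_on_compose2[OF sep_holomorphic_on_imp_continuous_on[OF B(2)]])
       (auto intro!: continuous_intros sub)
  moreover have "(\<lambda>c. h (coord_upd x k c)) holomorphic_on ball (x$k) \<rho>"
    by (rule holomorphic_on_subset[OF sep_holomorphic_onD[OF B(2)]]) (use sub x \<rho> in auto)
  ultimately show ?thesis
    using Cauchy_derivative_circle_integral[OF \<rho>(1)] by (auto intro: pd_eqI)
qed

lemma continuous_on_pd:
  assumes B: "open B" "sep_holomorphic_on B h"
  shows "continuous_on B (pd k h)"
proof -
  have "isCont (pd k h) y" if y: "y \<in> B" for y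
  proof -
    obtain \<rho> where \<rho>: "\<rho> > 0" "cball y (2*\<rho>) \<subseteq> B"
      using open_obtain_double_cball[OF B(1) y] by blast
    have "continuous_on (ball y \<rho> \<times> {0..1}) (\<lambda>(x, s). h (coord_upd x k (x$k + circ \<rho> s)) / circ \<rho> s)"
      using coord_upd_mem[OF _ _ \<rho>(2)] norm_circ[OF \<rho>(1)]
      by (intro continuous_on_circle_integrand[OF sep_holomorphic_on_imp_continuous_on[OF B(2)] continuous_on_id _ \<rho>(1), simplified])
         (auto intro: continuous_intros)
    then have "continuous_on (ball y \<rho>) (\<lambda>x. integral {0..1} (\<lambda>s. h (coord_upd x k (x$k + circ \<rho> s)) / circ \<rho> s))"
      by (rule integral_continuous_on_param[where a="0::real" and b=1, unfolded cbox_interval])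
    then have "continuous_on (ball y \<rho>) (pd k h)"
      by (rule continuous_on_eq) (simp add: pd_circle_integral[OF B \<rho>])
    then show ?thesis
      by (rule continuous_on_interior) (simp add: \<rho>(1))
  qed
  then show ?thesis
    by (simp add: continuous_at_imp_continuous_on)
qed

lemma has_field_derivative_pd_other_coord:
  assumes B: "open B" "sep_holomorphic_on B h" and \<rho>: "\<rho> > 0" "cball y (2*\<rho>) \<subseteq> B"
    and jk: "j \<noteq> k"
  shows "((\<lambda>c. pd k h (coord_upd y j c)) has_field_derivative
            integral {0..1} (\<lambda>s. pd j h (coord_upd y k (y$k + circ \<rho> s)) / circ \<rho> s)) (at (y$j))"
proof -
  define S where "S = ball (y$j) \<rho>"
  have inB: "coord_upd (coord_upd y j c) k (y$k + circ \<rho> s) \<in> B" if "c \<in> S" for c s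
    using coord_upd_mem[of "coord_upd y j c" y \<rho> "y$k + circ \<rho> s" k B] that \<rho> jk
      dist_coord_upd_self[of y j c] norm_circ[OF \<rho>(1)]
    by (simp add: S_def dist_commute dist_norm norm_minus_commute)
  have swap: "coord_upd (coord_upd y j c) k v = coord_upd (coord_upd y k v) j c" for c v
    using coord_upd_commute[OF jk] by simp
  have deriv_integral: "((\<lambda>c. integral {0..1} (\<lambda>s. h (coord_upd (coord_upd y j c) k (y$k + circ \<rho> s)) / circ \<rho> s))
         has_field_derivative
         integral {0..1} (\<lambda>s. pd j h (coord_upd (coord_upd y j (y$j)) k (y$k + circ \<rho> s)) / circ \<rho> s)) (at (y$j))"
  proof (rule has_field_derivative_integral_param)
    fix c s assume "c \<in> S"
    then have "((\<lambda>c. h (coord_upd (coord_upd y k (y$k + circ \<rho> s)) j c)) has_field_derivative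
        pd j h (coord_upd (coord_upd y k (y$k + circ \<rho> s)) j c)) (at c)"
      using inB unfolding swap by (intro sep_holomorphic_on_has_pd_at[OF B])
    then show "((\<lambda>c. h (coord_upd (coord_upd y j c) k (y$k + circ \<rho> s)) / circ \<rho> s) has_field_derivative
        pd j h (coord_upd (coord_upd y j c) k (y$k + circ \<rho> s)) / circ \<rho> s) (at c)"
      unfolding swap by (rule DERIV_cdivide)
  next
    show "continuous_on (S \<times> {0..1}) (\<lambda>(c, s). h (coord_upd (coord_upd y j c) k (y$k + circ \<rho> s)) / circ \<rho> s)"
      using inB
      by (intro continuous_on_circle_integrand[OF sep_holomorphic_on_imp_continuous_on[OF B(2)] _ _ \<rho>(1)])
         (auto intro: continuous_intros)
  next
    show "continuous_on (S \<times> {0..1}) (\<lambda>(c, s). pd j h (coord_upd (coord_upd y j c) k (y$k + circ \<rho> s)) / circ \<rho> s)"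
      using inB
      by (intro continuous_on_circle_integrand[OF continuous_on_pd[OF B] _ _ \<rho>(1)])
         (auto intro: continuous_intros)
  qed (use \<rho>(1) in \<open>auto simp: S_def\<close>)
  have pd_eq: "integral {0..1} (\<lambda>s. h (coord_upd (coord_upd y j c) k (y$k + circ \<rho> s)) / circ \<rho> s) = pd k h (coord_upd y j c)"
    if "c \<in> S" for c
    using pd_circle_integral[OF B \<rho>, of "coord_upd y j c" k] that jk dist_coord_upd_self[of y j c]
    by (simp add: S_def dist_commute dist_norm norm_minus_commute)
  have "((\<lambda>c. pd k h (coord_upd y j c)) has_field_derivative
        integral {0..1} (\<lambda>s. pd j h (coord_upd (coord_upd y j (y$j)) k (y$k + circ \<rho> s)) / circ \<rho> s)) (at (y$j))"
    by (rule has_field_derivative_transform_within_open[OF deriv_integral, of S]) (use \<rho>(1) pd_eq in \<open>auto simp: S_def\<close>)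
  then show ?thesis
    by simp
qed

lemma sep_holomorphic_on_pd:
  assumes B: "open B" "sep_holomorphic_on B h"
  shows "sep_holomorphic_on B (pd k h)"
  unfolding sep_holomorphic_on_def
proof (intro conjI ballI allI)
  show "continuous_on B (pd k h)"
    by (rule continuous_on_pd[OF B])
next
  fix y j assume y: "y \<in> B"
  show "(\<lambda>c. pd k h (coord_upd y j c)) holomorphic_on {c. coord_upd y j c \<in> B}"
  proof (cases "j = k")
    case True
    have "deriv (\<lambda>c. h (coord_upd y k c)) holomorphic_on {c. coord_upd y k c \<in> B}"
      by (rule holomorphic_deriv[OF sep_holomorphic_onD[OF B(2) y] open_coord_upd_preimage[OF B(1)]])
    then show ?thesis
      using True by (simp add: pd_eq_deriv_coord_upd)
  next
    case False
    have "(\<lambda>c. pd k h (coord_upd y j c)) field_differentiable at c" if c: "coord_upd y j c \<in> B" for c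
    proof -
      obtain \<rho> where "\<rho> > 0" "cball (coord_upd y j c) (2*\<rho>) \<subseteq> B"
        using open_obtain_double_cball[OF B(1) c] by blast
      from has_field_derivative_pd_other_coord[OF B this False] show ?thesis
        by (auto simp: field_differentiable_def)
    qed
    then show ?thesis
      by (simp add: holomorphic_on_open[OF open_coord_upd_preimage[OF B(1)]] field_differentiable_def)
  qed
qed

text \<open>Both mixed partials equal the same circle integral: differentiating the Cauchy
  representation of one partial under the integral sign yields that of the other.\<close>

lemma pd_commute:
  assumes B: "open B" "sep_holomorphic_on B h" and y: "y \<in> B"
  shows "pd j (pd l h) y = pd l (pd j h) y"
proof (cases "j = l")
  case False
  obtain \<rho> where \<rho>: "\<rho> > 0" "cball y (2*\<rho>) \<subseteq> B"
    using open_obtain_double_cball[OF B(1) y] by blast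
  have "pd j (pd l h) y = integral {0..1} (\<lambda>s. pd j h (coord_upd y l (y$l + circ \<rho> s)) / circ \<rho> s)"
    by (rule pd_eqI[OF has_field_derivative_pd_other_coord[OF B \<rho> False]])
  also have "\<dots> = pd l (pd j h) y"
    using pd_circle_integral[OF B(1) sep_holomorphic_on_pd[OF B] \<rho>, of y l] \<rho>(1) by simp
  finally show ?thesis .
qed simp

section \<open>Radial integrals\<close>

lemma integral_power_mult: "integral {0..1} (\<lambda>t. complex_of_real (t^k) * C) = C / (of_nat k + 1)"
proof -
  have "((\<lambda>t::real. t^k) has_integral (1 / (real k + 1))) {0..1}"
  proof -
    have "((\<lambda>t::real. t^k) has_integral (1^Suc k / Suc k - 0^Suc k / Suc k)) {0..1}"
    proof (rule fundamental_theorem_of_calculus)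
      fix x :: real
      have "((\<lambda>t::real. t^Suc k / Suc k) has_real_derivative x^k) (at x within {0..1})"
        by (rule derivative_eq_intros refl | simp del: of_nat_Suc)+
      then show "((\<lambda>t::real. t^Suc k / Suc k) has_vector_derivative x^k) (at x within {0..1})"
        by (simp add: has_real_derivative_iff_has_vector_derivative)
    qed simp
    then show ?thesis
      by (simp add: add.commute)
  qed
  then have "((\<lambda>t. complex_of_real (t^k) * C) has_integral complex_of_real (1 / (real k + 1)) * C) {0..1}"
    by (intro has_integral_mult_left has_integral_of_real)
  then have "integral {0..1} (\<lambda>t. complex_of_real (t^k) * C) = complex_of_real (1 / (real k + 1)) * C"
    by (rule integral_unique)
  also have "\<dots> = C / (of_nat k + 1)"
    by (simp add: field_simps)
  finally show ?thesis .
qed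

definition radial_integral :: "complex^'n \<Rightarrow> nat \<Rightarrow> (complex^'n \<Rightarrow> complex) \<Rightarrow> complex^'n \<Rightarrow> complex" where
  "radial_integral z m H x = integral {0..1} (\<lambda>t. complex_of_real (t^m) * H (z + t *\<^sub>R (x - z)))"

lemma radial_integral_center: "radial_integral z m H z = H z / (of_nat m + 1)"
  unfolding radial_integral_def by (simp only: diff_self scaleR_zero_right add_0_right integral_power_mult)

lemma radial_mem_ball:
  fixes z x :: "'a::real_normed_vector"
  assumes "x \<in> ball z r" "t \<in> {0..1}"
  shows "z + t *\<^sub>R (x - z) \<in> ball z r"
proof -
  have "dist z (z + t *\<^sub>R (x - z)) = t * dist z x"
    using assms(2) by (simp add: dist_norm norm_minus_commute)
  also have "\<dots> \<le> dist z x"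
    using assms(2) by (simp add: mult_left_le_one_le)
  finally show ?thesis
    using assms(1) by simp
qed

lemma radial_coord_upd:
  "z + t *\<^sub>R (coord_upd x j c - z) = coord_upd (z + t *\<^sub>R (x - z)) j (z$j + of_real t * (c - z$j))"
  by (simp add: vec_eq_iff) (simp add: scaleR_conv_of_real algebra_simps)

lemma continuous_on_radial_integrand:
  fixes H :: "complex^'n \<Rightarrow> complex"
  assumes H: "continuous_on (ball z r) H" and g: "continuous_on S g" and "g ` S \<subseteq> ball z r"
  shows "continuous_on (S \<times> {0..1}) (\<lambda>(x, t). complex_of_real (t^m) * H (z + t *\<^sub>R (g x - z)))"
proof -
  have g_fst: "continuous_on (S \<times> {0..1}) (\<lambda>p. g (fst p))"
    by (rule continuous_on_compose2[OF g continuous_on_fst]) auto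
  have "z + t *\<^sub>R (g x - z) \<in> ball z r" if "x \<in> S" "t \<in> {0..1}" for x t
    using radial_mem_ball[of "g x" z r t] assms(3) that by auto
  then have "continuous_on (S \<times> {0..1}) (\<lambda>p. complex_of_real (snd p ^ m) * H (z + snd p *\<^sub>R (g (fst p) - z)))"
    by (intro continuous_intros continuous_on_compose2[OF H] g_fst) auto
  then show ?thesis
    by (simp add: split_beta)
qed

lemma has_field_derivative_radial_integral:
  assumes H: "sep_holomorphic_on (ball z r) H" and x: "x \<in> ball z r"
  shows "((\<lambda>c. radial_integral z m H (coord_upd x j c)) has_field_derivative
          radial_integral z (Suc m) (pd j H) x) (at (x$j))"
proof -
  define S where "S = ball (x$j) (r - dist z x)"
  have inS: "coord_upd x j c \<in> ball z r" if "c \<in> S" for c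
    using that dist_triangle[of z "coord_upd x j c" x] dist_coord_upd_self[of x j c]
    by (simp add: S_def dist_commute dist_norm norm_minus_commute)
  have "((\<lambda>c. integral {0..1} (\<lambda>t. complex_of_real (t^m) * H (z + t *\<^sub>R (coord_upd x j c - z))))
        has_field_derivative
        integral {0..1} (\<lambda>t. complex_of_real (t^Suc m) * pd j H (z + t *\<^sub>R (coord_upd x j (x$j) - z))))
        (at (x$j))"
  proof (rule has_field_derivative_integral_param)
    fix c and t :: real assume c: "c \<in> S" and t: "t \<in> {0..1}"
    let ?p = "z + t *\<^sub>R (x - z)" and ?u = "\<lambda>c. z$j + of_real t * (c - z$j)"
    have "coord_upd ?p j (?u c) \<in> ball z r"
      using radial_mem_ball[OF inS[OF c] t] by (simp add: radial_coord_upd)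
    then have "((\<lambda>c. H (coord_upd ?p j (?u c))) has_field_derivative pd j H (coord_upd ?p j (?u c)) * of_real t) (at c)"
      by (intro DERIV_chain2[OF sep_holomorphic_on_has_pd_at[OF open_ball H]])
         (auto intro!: derivative_eq_intros)
    then have "((\<lambda>c. complex_of_real (t^m) * H (z + t *\<^sub>R (coord_upd x j c - z))) has_field_derivative
        complex_of_real (t^m) * (pd j H (z + t *\<^sub>R (coord_upd x j c - z)) * of_real t)) (at c)"
      unfolding radial_coord_upd by (rule DERIV_cmult)
    then show "((\<lambda>c. complex_of_real (t^m) * H (z + t *\<^sub>R (coord_upd x j c - z))) has_field_derivative
        complex_of_real (t^Suc m) * pd j H (z + t *\<^sub>R (coord_upd x j c - z))) (at c)"
      by (rule DERIV_cong) (simp add: mult_ac)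
  next
    show "continuous_on (S \<times> {0..1}) (\<lambda>(c, t). complex_of_real (t^m) * H (z + t *\<^sub>R (coord_upd x j c - z)))"
      using inS by (intro continuous_on_radial_integrand[OF sep_holomorphic_on_imp_continuous_on[OF H]])
         (auto intro: continuous_intros)
  next
    show "continuous_on (S \<times> {0..1}) (\<lambda>(c, t). complex_of_real (t^Suc m) * pd j H (z + t *\<^sub>R (coord_upd x j c - z)))"
      using inS by (intro continuous_on_radial_integrand[OF continuous_on_pd[OF open_ball H]])
         (auto intro: continuous_intros)
  qed (use x in \<open>auto simp: S_def\<close>)
  then show ?thesis
    by (simp add: radial_integral_def)
qed

lemma sep_holomorphic_on_radial_integral:
  assumes H: "sep_holomorphic_on (ball z r) H"
  shows "sep_holomorphic_on (ball z r) (radial_integral z m H)"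
  unfolding sep_holomorphic_on_def
proof (intro conjI ballI allI)
  have "continuous_on (ball z r \<times> {0..1}) (\<lambda>(x, t). complex_of_real (t^m) * H (z + t *\<^sub>R (id x - z)))"
    by (intro continuous_on_radial_integrand[OF sep_holomorphic_on_imp_continuous_on[OF H]] continuous_on_id) auto
  then show "continuous_on (ball z r) (radial_integral z m H)"
    unfolding radial_integral_def[abs_def] id_def
    by (rule integral_continuous_on_param[where a="0::real" and b=1, unfolded cbox_interval])
next
  fix y j assume "y \<in> ball z r"
  have "(\<lambda>c. radial_integral z m H (coord_upd y j c)) field_differentiable at c"
    if "coord_upd y j c \<in> ball z r" for c
    using has_field_derivative_radial_integral[OF H that, of m j]
    by (auto simp: field_differentiable_def)
  then show "(\<lambda>c. radial_integral z m H (coord_upd y j c)) holomorphic_on {c. coord_upd y j c \<in> ball z r}"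
    unfolding holomorphic_on_open[OF open_coord_upd_preimage[OF open_ball]] field_differentiable_def
    by blast
qed

lemma pd_radial_integral_center:
  assumes H: "sep_holomorphic_on (ball z r) H" and r: "r > 0"
  shows "pd j (radial_integral z m H) z = pd j H z / (of_nat m + 2)"
proof -
  have "pd j (radial_integral z m H) z = radial_integral z (Suc m) (pd j H) z"
    using has_field_derivative_radial_integral[OF H, of z m j] r by (auto intro: pd_eqI)
  then show ?thesis
    by (simp add: radial_integral_center add.commute)
qed

section \<open>Differential forms and the homotopy on the diagonal\<close>

lemma wsign_swap_less:
  fixes J :: "'n::{finite,linorder} set"
  assumes "j \<in> J" "l \<in> J" "j < l"
  shows "wsign j (J-{j}) * wsign l (J-{j}-{l}) = - (wsign l (J-{l}) * wsign j (J-{l}-{j}))"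
proof -
  define a where "a x = card {i\<in>J. i < x}" for x
  have "j \<in> {i\<in>J. i < l}"
    using assms by auto
  then have card_l: "card ({i\<in>J. i < l} - {j}) = a l - 1" and "a l \<ge> 1"
    by (auto simp: a_def Suc_le_eq card_gt_0_iff)
  have "{i\<in>J-{j}. i<j} = {i\<in>J. i<j}" "{i\<in>J-{j}-{l}. i<l} = {i\<in>J. i<l} - {j}"
       "{i\<in>J-{l}. i<l} = {i\<in>J. i<l}" "{i\<in>J-{l}-{j}. i<j} = {i\<in>J. i<j}"
    using assms(3) by auto
  then have "wsign j (J-{j}) * wsign l (J-{j}-{l}) = (-1)^(a j) * (-1)^(a l - 1)"
       and "wsign l (J-{l}) * wsign j (J-{l}-{j}) = (-1)^(a l) * (-1)^(a j)"
    by (simp_all only: wsign_def card_l a_def)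
  moreover have "(-1::complex)^(a l) = - ((-1)^(a l - 1))"
    using \<open>a l \<ge> 1\<close> by (cases "a l") simp_all
  ultimately show ?thesis
    by simp
qed

lemma wsign_swap:
  fixes J :: "'n::{finite,linorder} set"
  assumes "j \<in> J" "l \<in> J" "j \<noteq> l"
  shows "wsign j (J-{j}) * wsign l (J-{j}-{l}) = - (wsign l (J-{l}) * wsign j (J-{l}-{j}))"
  using assms wsign_swap_less[of j J l] wsign_swap_less[of l J j]
  by (cases j l rule: linorder_cases) auto

lemma sum_off_diagonal_antisym:
  fixes F :: "'a \<Rightarrow> 'a \<Rightarrow> 'b::{idom,ring_char_0}"
  assumes "finite J" and anti: "\<And>j l. j \<in> J \<Longrightarrow> l \<in> J \<Longrightarrow> j \<noteq> l \<Longrightarrow> F l j = - F j l"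
  shows "(\<Sum>j\<in>J. \<Sum>l\<in>J-{j}. F j l) = 0"
proof -
  have "(\<Sum>j\<in>J. \<Sum>l\<in>J-{j}. F j l) = (\<Sum>j\<in>J. \<Sum>l\<in>{l. l \<in> J \<and> j \<noteq> l}. F j l)"
    by (intro sum.cong) auto
  also have "\<dots> = (\<Sum>l\<in>J. \<Sum>j\<in>{j. j \<in> J \<and> j \<noteq> l}. F j l)"
    by (rule sum.swap_restrict) (simp_all add: assms(1))
  also have "\<dots> = (\<Sum>l\<in>J. \<Sum>j\<in>J-{l}. - F l j)"
    by (intro sum.cong) (auto simp: anti)
  also have "\<dots> = - (\<Sum>j\<in>J. \<Sum>l\<in>J-{j}. F j l)"
    by (simp add: sum_negf)
  finally show ?thesis
    by (simp add: eq_neg_iff_add_eq_0 flip: mult_2)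
qed

lemma wedge_dfun:
  fixes K :: "'n::{finite,linorder} set"
  shows "wedge (dfun f) \<beta> K z = (\<Sum>j\<in>K. wsign j (K-{j}) * pd j f z * \<beta> (K-{j}) z)"
proof -
  define F where "F I = shuffle_sign I (K - I) * dfun f I z * \<beta> (K - I) z" for I
  have "wedge (dfun f) \<beta> K z = (\<Sum>I\<in>Pow K. F I)"
    by (simp add: wedge_def F_def)
  also have "\<dots> = (\<Sum>I\<in>(\<lambda>j. {j}) ` K. F I)"
    by (rule sum.mono_neutral_right) (auto simp: F_def dfun_def card_1_singleton_iff)
  also have "\<dots> = (\<Sum>j\<in>K. F {j})"
    by (rule sum.reindex[unfolded o_def]) (simp add: inj_on_def)
  also have "\<dots> = (\<Sum>j\<in>K. wsign j (K-{j}) * pd j f z * \<beta> (K-{j}) z)"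
  proof (rule sum.cong[OF refl])
    fix j assume "j \<in> K"
    have "{(i, l). i \<in> {j} \<and> l \<in> K - {j} \<and> l < i} = Pair j ` {l\<in>K-{j}. l<j}"
      by auto
    then have "card {(i, l). i \<in> {j} \<and> l \<in> K - {j} \<and> l < i} = card {l\<in>K-{j}. l<j}"
      by (simp add: card_image inj_on_def)
    then show "F {j} = wsign j (K-{j}) * pd j f z * \<beta> (K-{j}) z"
      by (simp add: F_def shuffle_sign_def wsign_def dfun_def)
  qed
  finally show ?thesis .
qed

lemma wedge_dfun_const: "wedge (dfun (\<lambda>x. c)) \<beta> K z = 0"
  by (simp add: wedge_dfun pd_const)

lemma dwedge_Nil: "dwedge [] K z = (if K = {} then 1 else 0)"
  by (simp add: dwedge_def form_one_def)

lemma dwedge_Cons: "dwedge (f # fs) = wedge (dfun f) (dwedge fs)"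
  by (simp add: dwedge_def)

lemma dwedge_eq_0:
  fixes K :: "'n::{finite,linorder} set"
  shows "card K \<noteq> length fs \<Longrightarrow> dwedge fs K z = 0"
proof (induction fs arbitrary: K)
  case Nil
  then show ?case
    by (simp add: dwedge_Nil)
next
  case (Cons f fs)
  have "dwedge fs (K-{j}) z = 0" if "j \<in> K" for j
  proof (rule Cons.IH)
    have "card K > 0"
      using that by (auto simp: card_gt_0_iff)
    then show "card (K - {j}) \<noteq> length fs"
      using Cons.prems that by (simp add: card_Diff_singleton)
  qed
  then show ?case
    by (simp add: dwedge_Cons wedge_dfun)
qed

text \<open>The exterior derivative in the first variable of \<open>U \<times> U\<close>, evaluated on the diagonal.\<close>

definition d_diag :: "('n::{finite,linorder}) kform \<Rightarrow> 'n dform" where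
  "d_diag \<omega> J z = (\<Sum>j\<in>J. wsign j (J-{j}) * pd j (\<lambda>x. \<omega> (J-{j}) x z) z)"

lemma d_diag_sum:
  assumes r: "r > 0" and \<omega>: "\<And>i I. i \<in> A \<Longrightarrow> sep_holomorphic_on (ball z r) (\<lambda>x. \<omega> i I x z)"
  shows "d_diag (\<lambda>I x w. \<Sum>i\<in>A. a i * \<omega> i I x w) J z = (\<Sum>i\<in>A. a i * d_diag (\<omega> i) J z)"
proof -
  have z: "z \<in> ball z r"
    using r by simp
  have "pd j (\<lambda>x. \<Sum>i\<in>A. a i * \<omega> i I x z) z = (\<Sum>i\<in>A. a i * pd j (\<lambda>x. \<omega> i I x z) z)" for j I
    using \<omega> by (simp add: pd_sum[OF open_ball _ z] pd_cmult[OF open_ball _ z] sep_holomorphic_on_cmult)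
  then show ?thesis
    by (simp add: d_diag_def sum_distrib_left mult_ac sum.swap[of _ J])
qed

lemma d_diag_mult:
  assumes r: "r > 0" and f: "sep_holomorphic_on (ball z r) f"
    and \<omega>: "\<And>I. sep_holomorphic_on (ball z r) (\<lambda>x. \<omega> I x z)"
  shows "d_diag (\<lambda>I x w. f x * \<omega> I x w * g w) J z
           = g z * (wedge (dfun f) (\<lambda>I z. \<omega> I z z) J z + f z * d_diag \<omega> J z)"
proof -
  have z: "z \<in> ball z r"
    using r by simp
  have "pd j (\<lambda>x. f x * \<omega> I x z * g z) z = (pd j f z * \<omega> I z z + f z * pd j (\<lambda>x. \<omega> I x z) z) * g z" for j I
    by (simp add: pd_mult_right[OF open_ball sep_holomorphic_on_mult[OF f \<omega>] z] pd_mult[OF open_ball f \<omega> z])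
  then show ?thesis
    by (simp add: d_diag_def wedge_dfun sum_distrib_left sum.distrib algebra_simps)
qed

lemma KP_eq_radial_integral:
  "KP \<omega> J x w = (\<Sum>j\<in>J. wsign j (J-{j}) * radial_integral w (card (J-{j})) (pd j (\<lambda>x. \<omega> (J-{j}) x w)) x)"
  by (simp add: KP_def radial_integral_def pz_def pd_def)

lemma of_nat_card_Diff_singleton:
  "finite J \<Longrightarrow> j \<in> J \<Longrightarrow> of_nat (card (J - {j})) + 1 = (of_nat (card J) :: 'a::semiring_1)"
  by (metis card_Suc_Diff1 of_nat_Suc add.commute)

lemma KP_diag:
  fixes J :: "'n::{finite,linorder} set"
  shows "KP \<omega> J z z = d_diag \<omega> J z / of_nat (card J)"
proof -
  have "KP \<omega> J z z = (\<Sum>j\<in>J. wsign j (J-{j}) * pd j (\<lambda>x. \<omega> (J-{j}) x z) z / of_nat (card J))"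
    unfolding KP_eq_radial_integral
  proof (intro sum.cong refl)
    fix j assume "j \<in> J"
    then show "wsign j (J-{j}) * radial_integral z (card (J-{j})) (pd j (\<lambda>x. \<omega> (J-{j}) x z)) z
        = wsign j (J-{j}) * pd j (\<lambda>x. \<omega> (J-{j}) x z) z / of_nat (card J)"
      by (simp only: radial_integral_center of_nat_card_Diff_singleton[OF finite]) simp
  qed
  then show ?thesis
    by (simp add: d_diag_def sum_divide_distrib)
qed

lemma KP_diag_eq_dwedge:
  fixes J :: "'n::{finite,linorder} set"
  assumes "length fs = Suc m" and "d_diag \<omega> J z = dwedge fs J z / fact m"
  shows "KP \<omega> J z z = dwedge fs J z / fact (Suc m)"
proof (cases "card J = Suc m")
  case True
  then show ?thesis
    using assms(2) by (simp add: KP_diag)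
next
  case False
  then show ?thesis
    using assms by (simp add: KP_diag dwedge_eq_0)
qed

lemma sep_holomorphic_on_KP:
  assumes "\<And>I. sep_holomorphic_on (ball z r) (\<lambda>x. \<omega> I x z)"
  shows "sep_holomorphic_on (ball z r) (\<lambda>x. KP \<omega> J x z)"
  unfolding KP_eq_radial_integral
  by (intro sep_holomorphic_on_sum sep_holomorphic_on_cmult sep_holomorphic_on_radial_integral
        sep_holomorphic_on_pd[OF open_ball] assms)

lemma pd_KP_center:
  fixes I :: "'n::{finite,linorder} set"
  assumes r: "r > 0" and \<omega>: "\<And>I. sep_holomorphic_on (ball z r) (\<lambda>x. \<omega> I x z)"
  shows "pd j (\<lambda>x. KP \<omega> I x z) z
           = (\<Sum>l\<in>I. wsign l (I-{l}) * pd j (pd l (\<lambda>x. \<omega> (I-{l}) x z)) z) / (of_nat (card I) + 1)"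
proof -
  have z: "z \<in> ball z r"
    using r by simp
  have rad: "sep_holomorphic_on (ball z r) (radial_integral z m (pd l (\<lambda>x. \<omega> I' x z)))" for m l I'
    by (intro sep_holomorphic_on_radial_integral sep_holomorphic_on_pd[OF open_ball] \<omega>)
  have "pd j (\<lambda>x. KP \<omega> I x z) z
      = (\<Sum>l\<in>I. wsign l (I-{l}) * pd j (radial_integral z (card (I-{l})) (pd l (\<lambda>x. \<omega> (I-{l}) x z))) z)"
    unfolding KP_eq_radial_integral
    by (simp add: pd_sum[OF open_ball _ z] pd_cmult[OF open_ball rad z] sep_holomorphic_on_cmult[OF rad])
  also have "\<dots> = (\<Sum>l\<in>I. wsign l (I-{l}) * (pd j (pd l (\<lambda>x. \<omega> (I-{l}) x z)) z / (of_nat (card I) + 1)))"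
  proof (intro sum.cong refl)
    fix l assume "l \<in> I"
    then have "of_nat (card (I-{l})) + 2 = (of_nat (card I) + 1 :: complex)"
      by (simp only: one_add_one[symmetric] add.assoc[symmetric] of_nat_card_Diff_singleton[OF finite])
    then show "wsign l (I-{l}) * pd j (radial_integral z (card (I-{l})) (pd l (\<lambda>x. \<omega> (I-{l}) x z))) z
        = wsign l (I-{l}) * (pd j (pd l (\<lambda>x. \<omega> (I-{l}) x z)) z / (of_nat (card I) + 1))"
      by (simp add: pd_radial_integral_center[OF sep_holomorphic_on_pd[OF open_ball \<omega>] r])
  qed
  finally show ?thesis
    by (simp add: sum_divide_distrib)
qed

text \<open>The coefficients of \<open>d_diag (KP \<omega>)\<close> are mixed second partials weighted by
  antisymmetric signs, so they cancel in pairs.\<close>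

lemma d_diag_KP:
  fixes J :: "'n::{finite,linorder} set"
  assumes r: "r > 0" and \<omega>: "\<And>I. sep_holomorphic_on (ball z r) (\<lambda>x. \<omega> I x z)"
  shows "d_diag (KP \<omega>) J z = 0"
proof -
  define F where "F j l = wsign j (J-{j}) * wsign l (J-{j}-{l}) * pd j (pd l (\<lambda>x. \<omega> (J-{j}-{l}) x z)) z" for j l
  have "d_diag (KP \<omega>) J z = (\<Sum>j\<in>J. \<Sum>l\<in>J-{j}. F j l) / of_nat (card J)"
  proof -
    have "of_nat (card (J-{j})) + 1 = (of_nat (card J) :: complex)" if "j \<in> J" for j
      using that by (rule of_nat_card_Diff_singleton[OF finite])
    then show ?thesis
      by (simp add: d_diag_def pd_KP_center[where \<omega>=\<omega>, OF r \<omega>] F_def sum_divide_distrib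
          sum_distrib_left mult.assoc)
  qed
  also have "(\<Sum>j\<in>J. \<Sum>l\<in>J-{j}. F j l) = 0"
  proof (rule sum_off_diagonal_antisym)
    fix j l assume jl: "j \<in> J" "l \<in> J" "j \<noteq> l"
    have "J-{l}-{j} = J-{j}-{l}"
      by auto
    then show "F l j = - F j l"
      using wsign_swap[OF jl] pd_commute[where h="\<lambda>x. \<omega> (J-{j}-{l}) x z", OF open_ball \<omega>, of z] r
      by (simp add: F_def)
  qed simp
  finally show ?thesis
    by simp
qed

section \<open>The recursion for \<open>\<Phi>\<close>\<close>

definition bar_face :: "('a \<Rightarrow> complex) list \<Rightarrow> nat \<Rightarrow> ('a \<Rightarrow> complex) list" where
  "bar_face fs i = take i fs @ [(\<lambda>x. (fs!i) x * (fs!(i+1)) x)] @ drop (i+2) fs"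

lemma sum_list_bar_d:
  "sum_list (map (\<lambda>(s, gs). s * F gs) (bar_d fs)) = (\<Sum>i<length fs - 1. (-1)^i * F (bar_face fs i))"
  by (simp add: bar_d_def bar_face_def o_def sum_set_upt_conv_sum_list_nat[symmetric] atLeast0LessThan)

lemma length_bar_face: "i < length fs - 1 \<Longrightarrow> length (bar_face fs i) = length fs - 1"
  by (simp add: bar_face_def)

lemma sep_holomorphic_on_bar_face:
  assumes "\<forall>g\<in>set fs. sep_holomorphic_on B g" "i < length fs - 1"
  shows "\<forall>g\<in>set (bar_face fs i). sep_holomorphic_on B g"
proof -
  have "sep_holomorphic_on B (\<lambda>x. (fs!i) x * (fs!(i+1)) x)"
    using assms by (intro sep_holomorphic_on_mult) auto
  then show ?thesis
    using assms(1) set_take_subset[of i fs] set_drop_subset[of "i+2" fs]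
    by (auto simp: bar_face_def)
qed

text \<open>\<open>unit_pad q fs\<close> is \<open>1 \<otimes> f_1 \<otimes> \<dots> \<otimes> f_(q+1) \<otimes> 1\<close>, and \<open>Phi_bar_d q fs\<close> is
  \<open>\<Phi>^(-q)\<close> of its bar differential, the form to which \<open>P\<close> is applied in the recursion
  for \<open>\<Phi>^(-(q+1))\<close>.\<close>

definition unit_pad :: "nat \<Rightarrow> ('a \<Rightarrow> complex) list \<Rightarrow> ('a \<Rightarrow> complex) list" where
  "unit_pad q fs = [\<lambda>_. 1] @ take (Suc q) (drop 1 fs) @ [\<lambda>_. 1]"

definition Phi_bar_d :: "nat \<Rightarrow> (complex^('n::{finite,linorder}) \<Rightarrow> complex) list \<Rightarrow> 'n kform" where
  "Phi_bar_d q fs I x w = sum_list (map (\<lambda>(s, gs). s * Phi q gs I x w) (bar_d (unit_pad q fs)))"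

lemma Phi_Suc_eq:
  fixes fs :: "(complex^('n::{finite,linorder}) \<Rightarrow> complex) list"
  shows "Phi (Suc q) fs = (if CARD('n) < Suc q then (\<lambda>J z w. 0)
           else (\<lambda>J z w. (fs!0) z * KP (Phi_bar_d q fs) J z w * (fs!(Suc q + 1)) w))"
  by (simp add: Phi_bar_d_def[abs_def] unit_pad_def)

declare Phi.simps(2) [simp del]

lemma Phi_bar_d_eq_sum:
  "Phi_bar_d q fs = (\<lambda>I x w. \<Sum>i<length (unit_pad q fs) - 1. (-1)^i * Phi q (bar_face (unit_pad q fs) i) I x w)"
  by (simp add: Phi_bar_d_def[abs_def] sum_list_bar_d)

lemma length_unit_pad: "length fs = q + 3 \<Longrightarrow> length (unit_pad q fs) = q + 3"
  by (simp add: unit_pad_def)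

lemma sep_holomorphic_on_unit_pad:
  "\<forall>g\<in>set fs. sep_holomorphic_on B g \<Longrightarrow> \<forall>g\<in>set (unit_pad q fs). sep_holomorphic_on B g"
  using set_take_subset[of "Suc q" "drop 1 fs"] set_drop_subset[of 1 fs]
  by (auto simp: unit_pad_def sep_holomorphic_on_const)

lemma sep_holomorphic_on_Phi:
  fixes gs :: "(complex^('n::{finite,linorder}) \<Rightarrow> complex) list"
  assumes "r > 0"
  shows "length gs = m + 2 \<Longrightarrow> \<forall>g\<in>set gs. sep_holomorphic_on (ball z r) g \<Longrightarrow>
           sep_holomorphic_on (ball z r) (\<lambda>x. Phi m gs I x z)"
proof (induction m arbitrary: gs I)
  case 0
  then have "sep_holomorphic_on (ball z r) (gs!0)"
    by auto
  then show ?case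
    by (cases "I = {}") (auto intro: sep_holomorphic_on_mult sep_holomorphic_on_const)
next
  case (Suc m)
  let ?L = "unit_pad m gs"
  have "sep_holomorphic_on (ball z r) (\<lambda>x. Phi m (bar_face ?L i) I' x z)" if "i < length ?L - 1" for i I'
    using Suc.prems length_unit_pad[of gs m] length_bar_face[OF that]
      sep_holomorphic_on_bar_face[OF sep_holomorphic_on_unit_pad[OF Suc.prems(2)] that]
    by (intro Suc.IH) simp_all
  then have "sep_holomorphic_on (ball z r) (\<lambda>x. KP (Phi_bar_d m gs) I x z)"
    unfolding Phi_bar_d_eq_sum
    by (intro sep_holomorphic_on_KP sep_holomorphic_on_sum sep_holomorphic_on_cmult) simp
  moreover have "sep_holomorphic_on (ball z r) (gs!0)"
    using Suc.prems by auto
  ultimately show ?case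
    by (simp add: Phi_Suc_eq sep_holomorphic_on_const sep_holomorphic_on_mult)
qed

lemma sep_holomorphic_on_Phi_bar_d:
  fixes gs :: "(complex^('n::{finite,linorder}) \<Rightarrow> complex) list"
  assumes r: "r > 0" and gs: "length gs = m + 3" "\<forall>g\<in>set gs. sep_holomorphic_on (ball z r) g"
  shows "sep_holomorphic_on (ball z r) (\<lambda>x. Phi_bar_d m gs I x z)"
  unfolding Phi_bar_d_eq_sum
proof (intro sep_holomorphic_on_sum sep_holomorphic_on_cmult sep_holomorphic_on_Phi[OF r])
  fix i assume "i \<in> {..<length (unit_pad m gs) - 1}"
  then show "length (bar_face (unit_pad m gs) i) = m + 2"
    and "\<forall>g\<in>set (bar_face (unit_pad m gs) i). sep_holomorphic_on (ball z r) g"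
    using length_unit_pad[OF gs(1)] length_bar_face[of i "unit_pad m gs"]
      sep_holomorphic_on_bar_face[OF sep_holomorphic_on_unit_pad[OF gs(2)], of i m]
    by simp_all
qed

lemma d_diag_Phi_Suc:
  fixes gs :: "(complex^('n::{finite,linorder}) \<Rightarrow> complex) list"
  assumes r: "r > 0" and gs: "length gs = m + 3" "\<forall>g\<in>set gs. sep_holomorphic_on (ball z r) g"
    and card: "Suc m \<le> CARD('n)"
  shows "d_diag (Phi (Suc m) gs) J z
           = (gs!(m+2)) z * wedge (dfun (gs!0)) (\<lambda>I z. KP (Phi_bar_d m gs) I z z) J z"
proof -
  have \<omega>: "sep_holomorphic_on (ball z r) (\<lambda>x. Phi_bar_d m gs I x z)" for I
    by (rule sep_holomorphic_on_Phi_bar_d[OF r gs])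
  then have KP: "sep_holomorphic_on (ball z r) (\<lambda>x. KP (Phi_bar_d m gs) I x z)" for I
    by (rule sep_holomorphic_on_KP)
  have "sep_holomorphic_on (ball z r) (gs!0)"
    using gs by auto
  then show ?thesis
    using card
    by (simp add: Phi_Suc_eq d_diag_mult[where \<omega>="KP (Phi_bar_d m gs)", OF r _ KP]
        d_diag_KP[where \<omega>="Phi_bar_d m gs", OF r \<omega>])
qed

lemma d_diag_Phi_bar_d_0:
  fixes gs :: "(complex^('n::{finite,linorder}) \<Rightarrow> complex) list"
  assumes r: "r > 0" and gs: "length gs = 3" "\<forall>g\<in>set gs. sep_holomorphic_on (ball z r) g"
  shows "d_diag (Phi_bar_d 0 gs) J z = dwedge [gs!1] J z"
proof -
  obtain a b c where abc: "gs = [a, b, c]"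
    using gs(1) by (auto simp: numeral_3_eq_3 length_Suc_conv)
  have Phi0: "Phi_bar_d 0 [a, b, c] I x w = (if I = {} then b x - b w else 0)" for I x w
    by (simp add: Phi_bar_d_eq_sum unit_pad_def bar_face_def numeral_3_eq_3 lessThan_Suc)
  have "pd j (\<lambda>x. b x - b z) z = pd j b z" for j
    using gs(2) r abc
    by (intro pd_eqI DERIV_diff[where E=0, simplified] sep_holomorphic_on_has_pd[OF open_ball]) auto
  then have pd_Phi0: "pd j (\<lambda>x. Phi_bar_d 0 [a, b, c] I x z) z = (if I = {} then pd j b z else 0)" for j I
    by (cases "I = {}") (simp_all add: Phi0 pd_const)
  show ?thesis
    unfolding abc d_diag_def dwedge_Cons dwedge_Nil wedge_dfun
    by (intro sum.cong) (simp_all add: pd_Phi0)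
qed

lemma bar_face_unit_pad_0:
  assumes "length gs = m + 3"
  shows "bar_face (unit_pad m gs) 0 = gs!1 # take m (drop 2 gs) @ [\<lambda>_. 1]"
proof -
  obtain a b rest where "gs = a # b # rest"
    using assms by (auto simp: numeral_3_eq_3 length_Suc_conv)
  then show ?thesis
    by (simp add: bar_face_def unit_pad_def numeral_2_eq_2)
qed

lemma d_diag_Phi_bar_d_Suc:
  fixes gs :: "(complex^('n::{finite,linorder}) \<Rightarrow> complex) list"
  assumes r: "r > 0" and gs: "length gs = Suc m + 3" "\<forall>g\<in>set gs. sep_holomorphic_on (ball z r) g"
    and card: "Suc m \<le> CARD('n)"
  shows "d_diag (Phi_bar_d (Suc m) gs) J z
           = wedge (dfun (gs!1)) (\<lambda>I z. KP (Phi_bar_d m (bar_face (unit_pad (Suc m) gs) 0)) I z z) J z"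
proof -
  define E where "E i = bar_face (unit_pad (Suc m) gs) i" for i
  have E: "length (E i) = m + 3" "\<forall>g\<in>set (E i). sep_holomorphic_on (ball z r) g" if "i < m + 3" for i
    using gs that length_unit_pad[of gs "Suc m"] length_bar_face[of i "unit_pad (Suc m) gs"]
      sep_holomorphic_on_bar_face[OF sep_holomorphic_on_unit_pad[OF gs(2)], of i "Suc m"]
    by (simp_all add: E_def)
  have n: "length (unit_pad (Suc m) gs) - 1 = m + 3"
    by (simp add: length_unit_pad gs(1))
  have "sep_holomorphic_on (ball z r) (\<lambda>x. Phi (Suc m) (E i) I x z)" if "i < m + 3" for i I
    using E[OF that] by (intro sep_holomorphic_on_Phi[OF r]) simp_all
  then have "d_diag (Phi_bar_d (Suc m) gs) J z = (\<Sum>i<m+3. (-1)^i * d_diag (Phi (Suc m) (E i)) J z)"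
    unfolding Phi_bar_d_eq_sum n E_def[symmetric] by (intro d_diag_sum[OF r]) simp
  also have "\<dots> = (\<Sum>i<m+3. (-1)^i * ((E i)!(m+2)) z *
                      wedge (dfun ((E i)!0)) (\<lambda>I z. KP (Phi_bar_d m (E i)) I z z) J z)"
    using d_diag_Phi_Suc[OF r E] card by (simp add: mult.assoc)
  also have "\<dots> = wedge (dfun (gs!1)) (\<lambda>I z. KP (Phi_bar_d m (E 0)) I z z) J z"
  proof -
    have "E 0 ! 0 = gs!1" "E 0 ! (m+2) = (\<lambda>_. 1)"
      using bar_face_unit_pad_0[of gs "Suc m"] gs(1) by (simp_all add: E_def nth_append)
    moreover have "E (Suc i) ! 0 = (\<lambda>_. 1)" for i
      by (simp add: E_def bar_face_def unit_pad_def)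
    moreover have "m + 3 = Suc (m + 2)"
      by simp
    ultimately show ?thesis
      by (simp only: sum.lessThan_Suc_shift wedge_dfun_const) simp
  qed
  finally show ?thesis
    by (simp add: E_def)
qed

lemma d_diag_Phi_bar_d:
  fixes gs :: "(complex^('n::{finite,linorder}) \<Rightarrow> complex) list"
  assumes r: "r > 0"
  shows "length gs = m + 3 \<Longrightarrow> \<forall>g\<in>set gs. sep_holomorphic_on (ball z r) g \<Longrightarrow> Suc m \<le> CARD('n) \<Longrightarrow>
           d_diag (Phi_bar_d m gs) J z = dwedge (take (Suc m) (drop 1 gs)) J z / fact m"
proof (induction m arbitrary: gs J)
  case 0
  then have "take (Suc 0) (drop 1 gs) = [gs!1]"
    by (simp add: take_Suc_conv_app_nth)
  with 0 show ?case
    by (simp add: d_diag_Phi_bar_d_0[OF r])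
next
  case (Suc m)
  define E0 where "E0 = bar_face (unit_pad (Suc m) gs) 0"
  have E0: "E0 = gs!1 # take (Suc m) (drop 2 gs) @ [\<lambda>_. 1]"
    using bar_face_unit_pad_0[of gs "Suc m"] Suc.prems(1) by (simp add: E0_def)
  have E0_holo: "\<forall>g\<in>set E0. sep_holomorphic_on (ball z r) g"
    using sep_holomorphic_on_bar_face[OF sep_holomorphic_on_unit_pad[OF Suc.prems(2)], of 0 "Suc m"]
      length_unit_pad[OF Suc.prems(1)] by (simp add: E0_def)
  have "KP (Phi_bar_d m E0) I z z = dwedge (take (Suc m) (drop 2 gs)) I z / fact (Suc m)" for I
    using Suc.IH[OF _ E0_holo] Suc.prems(1,3) by (intro KP_diag_eq_dwedge) (simp_all add: E0)
  then have "d_diag (Phi_bar_d (Suc m) gs) J z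
      = wedge (dfun (gs!1)) (dwedge (take (Suc m) (drop 2 gs))) J z / fact (Suc m)"
    using d_diag_Phi_bar_d_Suc[OF r Suc.prems(1,2)] Suc.prems(3)
    by (simp add: E0_def[symmetric] wedge_dfun sum_divide_distrib)
  also have "wedge (dfun (gs!1)) (dwedge (take (Suc m) (drop 2 gs))) = dwedge (take (Suc (Suc m)) (drop 1 gs))"
  proof -
    have "drop 1 gs = gs!1 # drop 2 gs"
      using Suc.prems(1) by (simp add: Cons_nth_drop_Suc numeral_2_eq_2)
    then show ?thesis
      by (simp add: dwedge_Cons)
  qed
  finally show ?case .
qed

theorem lemma3p6:
  fixes U :: "(complex^('n::{finite,linorder})) set"
    and fs :: "(complex^('n::{finite,linorder}) \<Rightarrow> complex) list"
    and q :: nat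
  assumes "stein U"
    and "q \<ge> 1"
    and "length fs = q + 2"
    and "\<forall>f\<in>set fs. holo_on U f"
  shows "\<forall>J. \<forall>z\<in>U. Phi_tilde q fs J z =
           (1 / fact q) * (fs!0) z * (fs!(q+1)) z * dwedge (take q (drop 1 fs)) J z"
proof (intro allI ballI)
  fix J and z assume "z \<in> U"
  moreover have "open U"
    using assms(1) by (simp add: stein_def)
  ultimately obtain r where r: "r > 0" "ball z r \<subseteq> U"
    using open_contains_ball by blast
  have fs_holo: "\<forall>f\<in>set fs. sep_holomorphic_on (ball z r) f"
    using assms(4) holo_on_imp_sep_holomorphic_on[OF _ r(2) open_ball] by blast
  obtain m where q: "q = Suc m"
    using assms(2) by (cases q) auto
  show "Phi_tilde q fs J z = (1 / fact q) * (fs!0) z * (fs!(q+1)) z * dwedge (take q (drop 1 fs)) J z"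
  proof (cases "CARD('n) < q")
    case True
    have "card J \<le> CARD('n)"
      by (rule card_mono) auto
    with True assms(3) have "dwedge (take q (drop 1 fs)) J z = 0"
      by (intro dwedge_eq_0) simp
    with True show ?thesis
      by (simp add: Phi_tilde_def q Phi_Suc_eq)
  next
    case False
    have "KP (Phi_bar_d m fs) J z z = dwedge (take (Suc m) (drop 1 fs)) J z / fact (Suc m)"
      using assms(3) fs_holo False
      by (intro KP_diag_eq_dwedge d_diag_Phi_bar_d[OF r(1)]) (simp_all add: q)
    with False show ?thesis
      by (simp add: Phi_tilde_def q Phi_Suc_eq)
  qed
qed

end
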